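(* Let $(G,\cdot)$ be a loop with identity $e$ and $(H,\cdot)$ a non-trivial subloop such that $(xs\cdot z)s=x(sz\cdot s)$ for all $x,z\in G$, $s\in H$. If $(U,T,U)\in\mathrm{S_{1st}AUT}(G_H)$, then $T$ is a second Smarandache semi-automorphism of $G_H$, i.e. $eT=e$ and $(sy\cdot s)T=(sT\cdot yT)sT$ for all $y\in G$, $s\in H$.
   Context: Juxtaposition binds more tightly than $\cdot$; maps are written on the right. $SSYM(G_H)$ is the set of bijections $A$ of $G$ with $HA=H$. $\mathrm{S_{1st}AUT}(G_H)$ is the set of triples $(U,V,W)$ with $U,V,W\in SSYM(G_H)$ and $xU\cdot yV=(x\cdot y)W$ for all $x,y\in G$. *)

theory Defs
  imports Main
begin

definition loop :: "'a set \<Rightarrow> ('a \<Rightarrow> 'a \<Rightarrow> 'a) \<Rightarrow> 'a \<Rightarrow> bool" where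
  "loop G m e \<longleftrightarrow>
     (\<forall>x\<in>G. \<forall>y\<in>G. m x y \<in> G) \<and> e \<in> G \<and>
     (\<forall>x\<in>G. m e x = x \<and> m x e = x) \<and>
     (\<forall>a\<in>G. \<forall>b\<in>G. \<exists>!x. x \<in> G \<and> m a x = b) \<and>
     (\<forall>a\<in>G. \<forall>b\<in>G. \<exists>!y. y \<in> G \<and> m y a = b)"

definition subloop :: "'a set \<Rightarrow> 'a set \<Rightarrow> ('a \<Rightarrow> 'a \<Rightarrow> 'a) \<Rightarrow> 'a \<Rightarrow> bool" where
  "subloop H G m e \<longleftrightarrow> H \<subseteq> G \<and> loop H m e"

text \<open>SSYM(G_H): bijections A of G with HA = H (maps written on the right: xA = A x).\<close>
definition SSYM :: "'a set \<Rightarrow> 'a set \<Rightarrow> ('a \<Rightarrow> 'a) set" where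
  "SSYM G H = {A. bij_betw A G G \<and> A ` H = H}"

definition S1stAUT :: "'a set \<Rightarrow> 'a set \<Rightarrow> ('a \<Rightarrow> 'a \<Rightarrow> 'a) \<Rightarrow>
    (('a \<Rightarrow> 'a) \<times> ('a \<Rightarrow> 'a) \<times> ('a \<Rightarrow> 'a)) set" where
  "S1stAUT G H m = {(U, V, W). U \<in> SSYM G H \<and> V \<in> SSYM G H \<and> W \<in> SSYM G H \<and>
      (\<forall>x\<in>G. \<forall>y\<in>G. m (U x) (V y) = W (m x y))}"

end

theory Submission
  imports Defs
begin

text \<open>Evaluate \<open>U\<close> on \<open>(es \<cdot> y)s = e(sy \<cdot> s)\<close> in two ways. Applying the autotopism condition
  three times to the left-hand side gives \<open>(eU \<cdot> sT) yT \<cdot> sT\<close>, which the identity (with \<open>eU\<close> and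
  \<open>sT \<in> H\<close>) rewrites to \<open>eU \<cdot> (sT \<cdot> yT) sT\<close>; applying it once to the right-hand side gives
  \<open>eU \<cdot> (sy \<cdot> s)T\<close>. Left cancellation of \<open>eU\<close> yields the claim. Similarly
  \<open>eU \<cdot> eT = (e \<cdot> e)U = eU \<cdot> e\<close> gives \<open>eT = e\<close>.\<close>

lemma loop_closed: "loop G m e \<Longrightarrow> x \<in> G \<Longrightarrow> y \<in> G \<Longrightarrow> m x y \<in> G"
  unfolding loop_def by simp

lemma loop_identity_mem: "loop G m e \<Longrightarrow> e \<in> G"
  unfolding loop_def by simp

lemma loop_right_identity: "loop G m e \<Longrightarrow> x \<in> G \<Longrightarrow> m x e = x"
  unfolding loop_def by simp

lemma loop_left_cancel:
  assumes "loop G m e" "a \<in> G" "b \<in> G" "c \<in> G" "m a b = m a c"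
  shows "b = c"
proof -
  have "\<forall>a\<in>G. \<forall>b\<in>G. \<exists>!x. x \<in> G \<and> m a x = b"
    using assms(1) unfolding loop_def by (elim conjE)
  then have "\<exists>!x. x \<in> G \<and> m a x = m a b"
    using assms(2,3) loop_closed[OF assms(1)] by simp
  then show ?thesis using assms(3-5) by (metis (no_types))
qed

lemma S1stAUT_eq:
  "(U, V, W) \<in> S1stAUT G H m \<Longrightarrow> x \<in> G \<Longrightarrow> y \<in> G \<Longrightarrow> m (U x) (V y) = W (m x y)"
  unfolding S1stAUT_def by simp

lemma S1stAUT_SSYM:
  assumes "(U, V, W) \<in> S1stAUT G H m"
  shows "U \<in> SSYM G H" "V \<in> SSYM G H" "W \<in> SSYM G H"
  using assms unfolding S1stAUT_def by simp_all

lemma SSYM_mem_carrier: "A \<in> SSYM G H \<Longrightarrow> x \<in> G \<Longrightarrow> A x \<in> G"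
  unfolding SSYM_def bij_betw_def by auto

lemma SSYM_mem_sub: "A \<in> SSYM G H \<Longrightarrow> x \<in> H \<Longrightarrow> A x \<in> H"
  unfolding SSYM_def by auto

lemma S1stAUT_middle_fixes_identity:
  assumes loop: "loop G m e" and aut: "(U, V, U) \<in> S1stAUT G H m"
  shows "V e = e"
proof -
  have eG: "e \<in> G" using loop by (rule loop_identity_mem)
  have UeG: "U e \<in> G" using SSYM_mem_carrier[OF S1stAUT_SSYM(1)[OF aut] eG] .
  have VeG: "V e \<in> G" using SSYM_mem_carrier[OF S1stAUT_SSYM(2)[OF aut] eG] .
  have "m (U e) (V e) = m (U e) e"
    using S1stAUT_eq[OF aut eG eG] loop_right_identity[OF loop] eG UeG by simp
  then show ?thesis by (rule loop_left_cancel[OF loop UeG VeG eG])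
qed

lemma S1stAUT_middle_semi_automorphism:
  assumes loop: "loop G m e" and HG: "H \<subseteq> G"
    and ident: "\<forall>x\<in>G. \<forall>z\<in>G. \<forall>s\<in>H. m (m (m x s) z) s = m x (m (m s z) s)"
    and aut: "(U, T, U) \<in> S1stAUT G H m"
    and y: "y \<in> G" and s: "s \<in> H"
  shows "T (m (m s y) s) = m (m (T s) (T y)) (T s)"
proof -
  note closed = loop_closed[OF loop]
  have U: "U \<in> SSYM G H" and T: "T \<in> SSYM G H" using S1stAUT_SSYM[OF aut] by simp_all
  have eG: "e \<in> G" using loop by (rule loop_identity_mem)
  have sG: "s \<in> G" using s HG by blast
  have TsH: "T s \<in> H" using SSYM_mem_sub[OF T s] .
  have TsG: "T s \<in> G" using TsH HG by blast
  have TyG: "T y \<in> G" using SSYM_mem_carrier[OF T y] .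
  have UeG: "U e \<in> G" using SSYM_mem_carrier[OF U eG] .
  have sysG: "m (m s y) s \<in> G" using closed[OF closed[OF sG y] sG] .
  have "U (m (m (m e s) y) s) = m (m (m (U e) (T s)) (T y)) (T s)"
    using S1stAUT_eq[OF aut closed[OF closed[OF eG sG] y] sG]
      S1stAUT_eq[OF aut closed[OF eG sG] y] S1stAUT_eq[OF aut eG sG] by simp
  also have "\<dots> = m (U e) (m (m (T s) (T y)) (T s))"
    using ident UeG TyG TsH by simp
  finally have lhs: "U (m (m (m e s) y) s) = m (U e) (m (m (T s) (T y)) (T s))" .
  have "U (m (m (m e s) y) s) = U (m e (m (m s y) s))"
    using ident eG y s by simp
  also have "\<dots> = m (U e) (T (m (m s y) s))"
    using S1stAUT_eq[OF aut eG sysG] by simp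
  finally have rhs: "U (m (m (m e s) y) s) = m (U e) (T (m (m s y) s))" .
  from lhs rhs have "m (U e) (T (m (m s y) s)) = m (U e) (m (m (T s) (T y)) (T s))"
    by simp
  then show ?thesis
    using loop_left_cancel[OF loop UeG SSYM_mem_carrier[OF T sysG]] closed TsG TyG by simp
qed

theorem theorem3p6:
  fixes G H :: "'a set" and m :: "'a \<Rightarrow> 'a \<Rightarrow> 'a" and e :: 'a
    and U T :: "'a \<Rightarrow> 'a"
  assumes "loop G m e"
    and "subloop H G m e"
    and "H \<noteq> {e}"
    and "\<forall>x\<in>G. \<forall>z\<in>G. \<forall>s\<in>H. m (m (m x s) z) s = m x (m (m s z) s)"
    and "(U, T, U) \<in> S1stAUT G H m"
  shows "T e = e \<and> (\<forall>y\<in>G. \<forall>s\<in>H. T (m (m s y) s) = m (m (T s) (T y)) (T s))"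
proof -
  have HG: "H \<subseteq> G" using assms(2) unfolding subloop_def by blast
  show ?thesis
  proof (intro conjI ballI)
    show "T e = e" using S1stAUT_middle_fixes_identity[OF assms(1,5)] .
    show "T (m (m s y) s) = m (m (T s) (T y)) (T s)" if "y \<in> G" "s \<in> H" for y s
      using S1stAUT_middle_semi_automorphism[OF assms(1) HG assms(4,5) that] .
  qed
qed

end
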